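(* Let $n,k \in \mathbb{N}$ and let $f \colon \Delta_k^n \to \mathbb{R}$ be a $1$-concave function. Then for every $(i_1,\ldots,i_k) \in \Delta_k^n$, $$f(i_1,\ldots,i_k) \geq \sum_{j=1}^k \frac{i_j}{n} f(ne_j) \quad\text{and}\quad e^{f(i_1,\ldots,i_k)} \geq \prod_{j=1}^k \big(e^{f(ne_j)}\big)^{i_j/n},$$ where $e_1,\ldots,e_k$ are the standard basis vectors of $\mathbb{R}^k$.
   Context: $\Delta_k^n$ is the set of $I \in \mathbb{N}_0^k$ with $i_1+\cdots+i_k = n$. A function $f \colon \Delta_k^n \to \mathbb{R}$ is $1$-concave if for every $y \in \Delta_k^n$ and $j_1 \neq j_2$, with $L := \{s \in \mathbb{Z} : y + s(e_{j_1}-e_{j_2}) \in \Delta_k^n\}$ and $g(s) := f(y + s(e_{j_1}-e_{j_2}))$, one has $g(\sum_r\lambda_r s_r) \geq \sum_r \lambda_r g(s_r)$ whenever $s_r \in L$, $\lambda_r \geq 0$, $\sum_r\lambda_r = 1$, $\sum_r \lambda_r s_r \in L$. *)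

theory Defs
  imports Complex_Main
begin

text \<open>Points of Z^k are modelled as functions nat => int; coordinate j (1-based in the
paper) is index j-1 here, i.e. indices range over {..<k}, and coordinates outside are 0.\<close>

definition simplex :: "nat \<Rightarrow> nat \<Rightarrow> (nat \<Rightarrow> int) set" where
  "simplex k n = {I. (\<forall>i<k. 0 \<le> I i) \<and> (\<forall>i\<ge>k. I i = 0) \<and> (\<Sum>i<k. I i) = int n}"

definition unitv :: "nat \<Rightarrow> nat \<Rightarrow> int" where
  "unitv j = (\<lambda>i. if i = j then 1 else 0)"

definition line_pt :: "(nat \<Rightarrow> int) \<Rightarrow> nat \<Rightarrow> nat \<Rightarrow> int \<Rightarrow> nat \<Rightarrow> int" where
  "line_pt y j1 j2 s = (\<lambda>i. y i + s * (unitv j1 i - unitv j2 i))"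

definition line_set :: "nat \<Rightarrow> nat \<Rightarrow> (nat \<Rightarrow> int) \<Rightarrow> nat \<Rightarrow> nat \<Rightarrow> int set" where
  "line_set k n y j1 j2 = {s. line_pt y j1 j2 s \<in> simplex k n}"

definition one_concave :: "nat \<Rightarrow> nat \<Rightarrow> ((nat \<Rightarrow> int) \<Rightarrow> real) \<Rightarrow> bool" where
  "one_concave k n f \<longleftrightarrow>
    (\<forall>y \<in> simplex k n. \<forall>j1<k. \<forall>j2<k. j1 \<noteq> j2 \<longrightarrow>
      (let L = line_set k n y j1 j2; g = (\<lambda>s. f (line_pt y j1 j2 s)) in
       \<forall>(m::nat) (s::nat \<Rightarrow> int) (lam::nat \<Rightarrow> real) (t::int).
         (\<forall>r<m. s r \<in> L \<and> 0 \<le> lam r) \<and> (\<Sum>r<m. lam r) = 1 \<and>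
         t \<in> L \<and> real_of_int t = (\<Sum>r<m. lam r * real_of_int (s r))
         \<longrightarrow> g t \<ge> (\<Sum>r<m. lam r * g (s r))))"

end

theory Submission
  imports Defs
begin

text \<open>Induction on the size of the support of I. If two coordinates a, b of I are positive,
I lies on the segment of the line through I in direction e_a - e_b between the two points
obtained by moving all of the mass of b to a, respectively all of a to b; both have smaller
support. Concavity along that line, together with the fact that the right-hand side is affine
in I, reduces the claim to these two points. A point with a single nonzero coordinate is a
vertex n e_j, where the claim is an equality. The exponential form follows by monotonicity
of exp.\<close>

definition support :: "nat \<Rightarrow> (nat \<Rightarrow> int) \<Rightarrow> nat set" where
  "support k I = {j. j < k \<and> I j \<noteq> 0}"

definition vertex_average :: "nat \<Rightarrow> nat \<Rightarrow> ((nat \<Rightarrow> int) \<Rightarrow> real) \<Rightarrow> (nat \<Rightarrow> int) \<Rightarrow> real" where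
  "vertex_average k n f I = (\<Sum>j<k. real_of_int (I j) / real n * f (\<lambda>i. int n * unitv j i))"

lemma line_pt_zero [simp]: "line_pt y a b 0 = y"
  unfolding line_pt_def by simp

lemma line_pt_uminus: "line_pt y a b (- s) = line_pt y b a s"
  unfolding line_pt_def by (simp add: algebra_simps)

lemma line_pt_affine:
  assumes "real_of_int u = l * real_of_int s + (1 - l) * real_of_int t"
  shows "real_of_int (line_pt y a b u i) =
           l * real_of_int (line_pt y a b s i) + (1 - l) * real_of_int (line_pt y a b t i)"
  unfolding line_pt_def of_int_add of_int_mult assms by (simp add: algebra_simps)

lemma line_pt_in_simplex:
  assumes "y \<in> simplex k n" "a < k" "b < k" "a \<noteq> b"
    and "\<forall>i<k. 0 \<le> line_pt y a b s i"
  shows "line_pt y a b s \<in> simplex k n"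
proof -
  have "(\<Sum>i<k. line_pt y a b s i) = (\<Sum>i<k. y i) + s * ((\<Sum>i<k. unitv a i) - (\<Sum>i<k. unitv b i))"
    unfolding line_pt_def by (simp add: sum.distrib sum_distrib_left sum_subtractf algebra_simps)
  moreover have "(\<Sum>i<k. unitv a i) = 1" "(\<Sum>i<k. unitv b i) = 1"
    using assms(2,3) unfolding unitv_def by simp_all
  ultimately show ?thesis
    using assms unfolding simplex_def line_pt_def unitv_def by auto
qed

lemma one_concave_two_point:
  assumes "one_concave k n f" "y \<in> simplex k n" "a < k" "b < k" "a \<noteq> b"
    and "line_pt y a b s \<in> simplex k n" "line_pt y a b t \<in> simplex k n"
    and "line_pt y a b u \<in> simplex k n"
    and "0 \<le> l" "l \<le> 1" "real_of_int u = l * real_of_int s + (1 - l) * real_of_int t"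
  shows "f (line_pt y a b u) \<ge> l * f (line_pt y a b s) + (1 - l) * f (line_pt y a b t)"
proof -
  define ss where "ss r = (if r = 0 then s else t)" for r :: nat
  define lam where "lam r = (if r = 0 then l else 1 - l)" for r :: nat
  have "f (line_pt y a b u) \<ge> (\<Sum>r<2. lam r * f (line_pt y a b (ss r)))"
    using assms(1) unfolding one_concave_def Let_def
  proof (elim ballE allE impE)
    show "(\<forall>r<2. ss r \<in> line_set k n y a b \<and> 0 \<le> lam r) \<and> (\<Sum>r<2. lam r) = 1 \<and>
          u \<in> line_set k n y a b \<and> real_of_int u = (\<Sum>r<2. lam r * real_of_int (ss r))"
      using assms(6-) unfolding line_set_def ss_def lam_def
      by (auto simp: numeral_2_eq_2 lessThan_Suc less_Suc_eq)
  qed (use assms(2-5) in auto)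
  then show ?thesis
    unfolding ss_def lam_def by (simp add: numeral_2_eq_2 lessThan_Suc)
qed

lemma vertex_average_affine:
  assumes "\<And>j. real_of_int (I j) = l * real_of_int (P j) + (1 - l) * real_of_int (Q j)"
  shows "vertex_average k n f I = l * vertex_average k n f P + (1 - l) * vertex_average k n f Q"
  unfolding vertex_average_def assms
  by (simp add: sum.distrib sum_distrib_left add_divide_distrib ring_distribs mult.assoc)

lemma vertex_average_vertex:
  assumes "n \<ge> 1" "j < k"
  shows "vertex_average k n f (\<lambda>i. int n * unitv j i) = f (\<lambda>i. int n * unitv j i)"
proof -
  have "vertex_average k n f (\<lambda>i. int n * unitv j i) =
          (\<Sum>i<k. if i = j then f (\<lambda>i. int n * unitv j i) else 0)"
    unfolding vertex_average_def using assms(1)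
    by (intro sum.cong refl) (simp add: unitv_def)
  then show ?thesis using assms(2) by simp
qed

lemma simplex_eq_vertex:
  assumes "I \<in> simplex k n" "n \<ge> 1" "\<And>a b. a \<in> support k I \<Longrightarrow> b \<in> support k I \<Longrightarrow> a = b"
  obtains j where "j < k" "I = (\<lambda>i. int n * unitv j i)"
proof -
  have sum_I: "(\<Sum>i<k. I i) = int n" and zero_I: "\<forall>i\<ge>k. I i = 0"
    using assms(1) unfolding simplex_def by auto
  have "\<exists>j<k. I j \<noteq> 0"
  proof (rule ccontr)
    assume "\<not> (\<exists>j<k. I j \<noteq> 0)"
    then have "(\<Sum>i<k. I i) = 0" by simp
    with sum_I assms(2) show False by simp
  qed
  then obtain j where j: "j < k" "I j \<noteq> 0" by blast
  have off_j: "I i = 0" if "i \<noteq> j" for i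
    using assms(3)[of i j] j zero_I that unfolding support_def by (cases "i < k") auto
  have "(\<Sum>i<k. I i) = (\<Sum>i<k. if i = j then I j else 0)"
    using off_j by (intro sum.cong) auto
  with sum_I j(1) have "I j = int n" by simp
  with off_j have "I = (\<lambda>i. int n * unitv j i)"
    unfolding unitv_def by fastforce
  with j that show thesis by blast
qed

lemma line_pt_transfer_in_simplex:
  assumes "I \<in> simplex k n" "a < k" "b < k" "a \<noteq> b"
  shows "line_pt I a b (I b) \<in> simplex k n"
proof (rule line_pt_in_simplex[OF assms])
  have "\<forall>i<k. 0 \<le> I i" using assms(1) unfolding simplex_def by blast
  then show "\<forall>i<k. 0 \<le> line_pt I a b (I b) i"
    using assms(2-4) unfolding line_pt_def unitv_def by (simp add: add_nonneg_nonneg)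
qed

lemma support_line_pt_transfer_shrinks:
  assumes "a < k" "b < k" "a \<noteq> b" "I a \<noteq> 0" "I b \<noteq> 0"
  shows "card (support k (line_pt I a b (I b))) < card (support k I)"
proof (rule psubset_card_mono)
  have P: "line_pt I a b (I b) i = (if i = a then I a + I b else if i = b then 0 else I i)" for i
    using assms(3) unfolding line_pt_def unitv_def by simp
  show "support k (line_pt I a b (I b)) \<subset> support k I"
    using assms unfolding support_def P by auto
qed (simp add: support_def)

lemma one_concave_ge_vertex_average:
  assumes "n \<ge> 1" "one_concave k n f" "I \<in> simplex k n"
  shows "f I \<ge> vertex_average k n f I"
  using assms(3)
proof (induction "card (support k I)" arbitrary: I rule: less_induct)
  case less
  show ?case
  proof (cases "\<exists>a\<in>support k I. \<exists>b\<in>support k I. a \<noteq> b")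
    case True
    then obtain a b where ab: "a < k" "b < k" "a \<noteq> b" "I a \<noteq> 0" "I b \<noteq> 0"
      unfolding support_def by blast
    have pos: "I a > 0" "I b > 0"
      using ab less.prems unfolding simplex_def by (auto simp: order_less_le)
    define P where "P = line_pt I a b (I b)"
    define Q where "Q = line_pt I b a (I a)"
    define l where "l = real_of_int (I a) / real_of_int (I a + I b)"
    have l: "0 \<le> l" "l \<le> 1" using pos unfolding l_def by auto
    have I_comb: "real_of_int 0 = l * real_of_int (I b) + (1 - l) * real_of_int (- I a)"
      using pos unfolding l_def by (simp add: field_simps)
    have P_simplex: "P \<in> simplex k n" and Q_simplex: "Q \<in> simplex k n"
      unfolding P_def Q_def using line_pt_transfer_in_simplex less.prems ab by blast+
    have Q_line: "Q = line_pt I a b (- I a)"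
      unfolding Q_def line_pt_uminus ..
    have "vertex_average k n f I = l * vertex_average k n f P + (1 - l) * vertex_average k n f Q"
      using line_pt_affine[OF I_comb] unfolding P_def Q_line
      by (intro vertex_average_affine) simp
    also have "\<dots> \<le> l * f P + (1 - l) * f Q"
    proof -
      have "f P \<ge> vertex_average k n f P"
        using less.hyps[OF _ P_simplex] support_line_pt_transfer_shrinks[OF ab] P_def by blast
      moreover have "f Q \<ge> vertex_average k n f Q"
        using less.hyps[OF _ Q_simplex] Q_def
          support_line_pt_transfer_shrinks[OF ab(2,1) ab(3)[symmetric] ab(5,4)] by blast
      ultimately show ?thesis using l by (intro add_mono mult_left_mono) auto
    qed
    also have "\<dots> \<le> f I"
      using one_concave_two_point[OF assms(2) less.prems ab(1-3) _ _ _ l I_comb]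
        P_simplex Q_simplex less.prems unfolding P_def Q_line by simp
    finally show ?thesis .
  next
    case False
    then obtain j where "j < k" "I = (\<lambda>i. int n * unitv j i)"
      using simplex_eq_vertex[OF less.prems assms(1)] by blast
    then show ?thesis using vertex_average_vertex[OF assms(1)] by simp
  qed
qed

theorem lemma4p9:
  fixes k n :: nat and f :: "(nat \<Rightarrow> int) \<Rightarrow> real"
  assumes "n \<ge> 1"
    and "one_concave k n f"
    and "I \<in> simplex k n"
  shows "f I \<ge> (\<Sum>j<k. (real_of_int (I j) / real n) * f (\<lambda>i. int n * unitv j i)) \<and>
         exp (f I) \<ge> (\<Prod>j<k. exp (f (\<lambda>i. int n * unitv j i)) powr (real_of_int (I j) / real n))"
proof
  have linear: "f I \<ge> (\<Sum>j<k. (real_of_int (I j) / real n) * f (\<lambda>i. int n * unitv j i))"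
    using one_concave_ge_vertex_average[OF assms] unfolding vertex_average_def .
  then show "f I \<ge> (\<Sum>j<k. (real_of_int (I j) / real n) * f (\<lambda>i. int n * unitv j i))" .
  have "(\<Prod>j<k. exp (f (\<lambda>i. int n * unitv j i)) powr (real_of_int (I j) / real n))
      = exp (\<Sum>j<k. (real_of_int (I j) / real n) * f (\<lambda>i. int n * unitv j i))"
    by (simp add: powr_def exp_sum mult.commute)
  also have "\<dots> \<le> exp (f I)" using linear by simp
  finally show "exp (f I) \<ge> (\<Prod>j<k. exp (f (\<lambda>i. int n * unitv j i)) powr (real_of_int (I j) / real n))" .
qed

end
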